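(* Let $\alpha>0$, $n\ge1$ an integer, and $d\nu(r)=r^{n-1}e^{-1/r^{\alpha}}dr$ on $(0,\infty)$. There exist constants $c,c'>0$ and $0<v_0<1$ such that the function $$J(v)=\begin{cases}c\,v\big(\log\frac1v\big)^{1+\frac1\alpha}, & 0\le v\le v_0,\\ c'\,v^{\frac{n-1}{n}}, & v>v_0\end{cases}$$ (with $J(0)=0$) satisfies: (i) $J$ is a lower isoperimetric function for $\nu$; (ii) $J$ is concave, increasing and continuous on $(0,\infty)$.
   Context: For a Borel set $A\subset(0,\infty)$, $\nu^+(A)=\liminf_{r\to0^+}\frac{\nu(A^r)-\nu(A)}{r}$, where $A^r$ is the $r$-neighborhood of $A$. $J$ is a lower isoperimetric function for $\nu$ if $\nu^+(A)\ge J(\nu(A))$ for all Borel $A$. *)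

theory Defs
  imports "HOL-Analysis.Analysis"
begin

definition nu_meas :: "real \<Rightarrow> nat \<Rightarrow> real measure" where
  "nu_meas \<alpha> n = density lborel
     (\<lambda>r. if 0 < r then ennreal (r ^ (n - 1) * exp (- 1 / (r powr \<alpha>))) else 0)"

definition nbhd :: "real set \<Rightarrow> real \<Rightarrow> real set" where
  "nbhd A r = {x. \<exists>a\<in>A. dist x a < r}"

definition boundary_measure :: "real measure \<Rightarrow> real set \<Rightarrow> ereal" where
  "boundary_measure M A = Liminf (at_right 0)
     (\<lambda>r. (enn2ereal (emeasure M (nbhd A r)) - enn2ereal (emeasure M A)) / ereal r)"

definition lower_isoperimetric :: "real measure \<Rightarrow> (real \<Rightarrow> real) \<Rightarrow> bool" where
  "lower_isoperimetric M J \<longleftrightarrow>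
     (\<forall>A. A \<in> sets borel \<longrightarrow> A \<subseteq> {0<..} \<longrightarrow> emeasure M A < \<infinity> \<longrightarrow>
        boundary_measure M A \<ge> ereal (J (measure M A)))"

end

theory Submission
  imports Defs
begin

text \<open>
  The density f(r) = r^(n-1) exp(-r^(-alpha)) is increasing. If A is bounded with s = sup A,
  then the r-neighbourhood of A contains A together with (s, s + r), so it gains at least
  r f(s) in measure, while nu(A) <= nu(0, s]; if A is unbounded its neighbourhoods have infinite
  measure. Hence it suffices that J is increasing and J(nu(0, s]) <= f(s) for all s > 0.
  For s >= 1 this follows from nu(0, s] <= s^n and f(s) >= s^(n-1)/e, which the branch
  c' v^((n-1)/n) matches. For s <= 1, comparing f with the derivative of exp(-t^(-alpha)) gives
  nu(0, s] <= s^(alpha+1) f(s) / alpha, whose logarithm is O(s^(-alpha)); this is exactly what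
  the branch c v log(1/v)^(1+1/alpha) needs. The branches are glued at v0 = exp(-n(1+1/alpha)),
  where they have equal values and slopes, so J is C^1 with decreasing derivative, hence concave.
\<close>

lemma has_real_derivative_if_le:
  assumes f: "(f has_real_derivative D) (at b)" and g: "(g has_real_derivative D) (at b)"
    and fg: "f b = g b"
  shows "((\<lambda>x. if x \<le> b then f x else g x) has_real_derivative D) (at b)"
proof -
  let ?h = "\<lambda>x. if x \<le> b then f x else g x"
  have "(?h has_real_derivative D) (at b within {..b})"
    by (rule has_field_derivative_transform_within[OF has_field_derivative_at_within[OF f], of 1])
       auto
  moreover have "(?h has_real_derivative D) (at b within {b..})"
    by (rule has_field_derivative_transform_within[OF has_field_derivative_at_within[OF g], of 1])
       (use fg in auto)
  ultimately have "(?h has_real_derivative D) (at b within {..b} \<union> {b..})"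
    by (simp add: has_field_derivative_iff Lim_within_Un)
  moreover have "{..b} \<union> {b..} = (UNIV :: real set)" by auto
  ultimately show ?thesis by simp
qed

lemma powr_mult_exp_antimono:
  fixes a b s t :: real
  assumes "0 \<le> a" "0 < b" "0 < s" "a * b \<le> s" "s \<le> t"
  shows "t powr a * exp (- t / b) \<le> s powr a * exp (- s / b)"
proof -
  have "ln (t / s) \<le> t / s - 1" using assms by (intro ln_le_minus_one) auto
  then have "a * ln (t / s) \<le> a * ((t - s) / s)"
    using assms(1,3) by (simp add: mult_left_mono diff_divide_distrib)
  also have "\<dots> \<le> (t - s) / b"
    using assms mult_left_mono[OF assms(4), of "t - s"] by (simp add: field_simps)
  finally have "(t / s) powr a \<le> exp ((t - s) / b)"
    using assms by (simp add: powr_def)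
  then have "t powr a \<le> s powr a * exp ((t - s) / b)"
    using assms by (simp add: powr_divide field_simps)
  then have "t powr a * exp (- t / b) \<le> s powr a * exp ((t - s) / b) * exp (- t / b)"
    by (rule mult_right_mono) simp
  also have "\<dots> = s powr a * exp (- s / b)"
    by (simp add: mult.assoc diff_divide_distrib flip: exp_add)
  finally show ?thesis .
qed

section \<open>The isoperimetric profile\<close>

definition switch_point :: "real \<Rightarrow> nat \<Rightarrow> real" where
  "switch_point \<beta> n = exp (- (real n * \<beta>))"

definition log_branch :: "real \<Rightarrow> real \<Rightarrow> real" where
  "log_branch \<beta> v = v * ln (1 / v) powr \<beta>"

text \<open>The coefficient makes the two branches agree at the switch point.\<close>

definition power_coeff :: "real \<Rightarrow> nat \<Rightarrow> real" where
  "power_coeff \<beta> n = (real n * \<beta>) powr \<beta> * exp (- \<beta>)"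

definition power_branch :: "real \<Rightarrow> nat \<Rightarrow> real \<Rightarrow> real" where
  "power_branch \<beta> n v = power_coeff \<beta> n * v powr (real (n - 1) / real n)"

definition isoprofile :: "real \<Rightarrow> nat \<Rightarrow> real \<Rightarrow> real" where
  "isoprofile \<beta> n v = (if v \<le> switch_point \<beta> n then log_branch \<beta> v else power_branch \<beta> n v)"

definition isoprofile_deriv :: "real \<Rightarrow> nat \<Rightarrow> real \<Rightarrow> real" where
  "isoprofile_deriv \<beta> n v =
     (if v \<le> switch_point \<beta> n then ln (1 / v) powr (\<beta> - 1) * (ln (1 / v) - \<beta>)
      else power_coeff \<beta> n * (real (n - 1) / real n) * v powr (real (n - 1) / real n - 1))"

lemma log_branch_has_real_derivative:
  assumes "0 < v" "v < 1"
  shows "(log_branch \<beta> has_real_derivative ln (1 / v) powr (\<beta> - 1) * (ln (1 / v) - \<beta>)) (at v)"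
proof -
  have L: "ln (1 / v) > 0" using assms by (simp add: ln_div)
  have "((\<lambda>x. x * (- ln x) powr \<beta>) has_real_derivative
          ln (1 / v) powr (\<beta> - 1) * (ln (1 / v) - \<beta>)) (at v)"
    using assms L
    by (auto intro!: derivative_eq_intros simp: ln_div field_simps powr_diff)
  then show ?thesis
    by (rule has_field_derivative_transform_within_open[where S = "{0<..}"])
       (use assms in \<open>auto simp: log_branch_def ln_div\<close>)
qed

lemma power_branch_has_real_derivative:
  assumes "0 < v"
  shows "(power_branch \<beta> n has_real_derivative
           power_coeff \<beta> n * (real (n - 1) / real n) * v powr (real (n - 1) / real n - 1)) (at v)"
  unfolding power_branch_def using assms by (auto intro!: derivative_eq_intros)

context
  fixes \<beta> :: real and n :: nat
  assumes \<beta>: "1 \<le> \<beta>" and n: "1 \<le> n"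
begin

lemma switch_point_pos: "0 < switch_point \<beta> n"
  by (simp add: switch_point_def)

lemma switch_point_less_one: "switch_point \<beta> n < 1"
  using \<beta> n by (simp add: switch_point_def)

lemma ln_inverse_switch_point: "ln (1 / switch_point \<beta> n) = real n * \<beta>"
  by (simp add: switch_point_def ln_div)

lemma ln_inverse_ge_if_le_switch_point:
  assumes "0 < v" "v \<le> switch_point \<beta> n"
  shows "real n * \<beta> \<le> ln (1 / v)"
proof -
  have "ln v \<le> ln (switch_point \<beta> n)" using assms switch_point_pos by simp
  moreover have "ln (1 / v) = - ln v" "ln (1 / switch_point \<beta> n) = - ln (switch_point \<beta> n)"
    using assms switch_point_pos by (simp_all add: ln_div)
  ultimately show ?thesis using ln_inverse_switch_point by linarith
qed

lemma le_ln_inverse_if_le_switch_point: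
  assumes "0 < v" "v \<le> switch_point \<beta> n"
  shows "\<beta> \<le> ln (1 / v)"
proof -
  have "\<beta> \<le> real n * \<beta>" using mult_right_mono[of 1 "real n" \<beta>] \<beta> n by simp
  then show ?thesis using ln_inverse_ge_if_le_switch_point[OF assms] by linarith
qed

lemma power_branch_switch_point: "power_branch \<beta> n (switch_point \<beta> n) = log_branch \<beta> (switch_point \<beta> n)"
proof -
  have "exp (- \<beta>) * switch_point \<beta> n powr (real (n - 1) / real n) = switch_point \<beta> n"
    using n by (simp add: switch_point_def powr_def exp_add[symmetric] of_nat_diff field_simps)
  then show ?thesis
    by (simp add: power_branch_def power_coeff_def log_branch_def ln_inverse_switch_point mult_ac)
qed

lemma power_deriv_switch_point:
  "power_coeff \<beta> n * (real (n - 1) / real n)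
     * switch_point \<beta> n powr (real (n - 1) / real n - 1) = isoprofile_deriv \<beta> n (switch_point \<beta> n)"
proof -
  define \<gamma> where "\<gamma> = real (n - 1) / real n"
  have "exp (- \<beta>) * switch_point \<beta> n powr (\<gamma> - 1) = 1"
    using n by (simp add: \<gamma>_def switch_point_def powr_def exp_add[symmetric] of_nat_diff field_simps)
  moreover have "(real n * \<beta>) powr \<beta> * \<gamma> = (real n * \<beta>) powr (\<beta> - 1) * (real n * \<beta> - \<beta>)"
    using \<beta> n by (simp add: \<gamma>_def powr_diff of_nat_diff field_simps)
  ultimately show ?thesis
    unfolding \<gamma>_def[symmetric]
    by (simp add: isoprofile_deriv_def power_coeff_def ln_inverse_switch_point)
       (metis mult.assoc mult.commute mult.left_commute mult_1_right)
qed

lemma isoprofile_has_real_derivative: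
  assumes "0 < v"
  shows "(isoprofile \<beta> n has_real_derivative isoprofile_deriv \<beta> n v) (at v)"
proof -
  let ?v0 = "switch_point \<beta> n"
  have log: "(log_branch \<beta> has_real_derivative isoprofile_deriv \<beta> n x) (at x)"
    if "0 < x" "x \<le> ?v0" for x
    using log_branch_has_real_derivative[of x \<beta>] that switch_point_less_one
    by (simp add: isoprofile_deriv_def)
  have pow: "(power_branch \<beta> n has_real_derivative isoprofile_deriv \<beta> n x) (at x)"
    if "?v0 < x" for x
    using power_branch_has_real_derivative[of x \<beta> n] that switch_point_pos
    by (simp add: isoprofile_deriv_def)
  consider "v < ?v0" | "v = ?v0" | "?v0 < v" by linarith
  then show ?thesis
  proof cases
    case 1
    then show ?thesis
      by (intro has_field_derivative_transform_within_open[OF log, where S = "{..<?v0}"])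
         (use assms in \<open>auto simp: isoprofile_def\<close>)
  next
    case 3
    then show ?thesis
      by (intro has_field_derivative_transform_within_open[OF pow, where S = "{?v0<..}"])
         (auto simp: isoprofile_def)
  next
    case 2
    have "(power_branch \<beta> n has_real_derivative isoprofile_deriv \<beta> n ?v0) (at ?v0)"
      using power_branch_has_real_derivative[OF switch_point_pos, of \<beta> n]
      unfolding power_deriv_switch_point .
    from has_real_derivative_if_le[OF log[OF switch_point_pos order.refl] this
        power_branch_switch_point[symmetric]]
    show ?thesis using 2 by (simp add: isoprofile_def[abs_def])
  qed
qed

lemma isoprofile_deriv_antimono:
  assumes "0 < x" "x \<le> y"
  shows "isoprofile_deriv \<beta> n y \<le> isoprofile_deriv \<beta> n x"
proof -
  let ?v0 = "switch_point \<beta> n"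
  have log: "ln (1 / y') powr (\<beta> - 1) * (ln (1 / y') - \<beta>) \<le> ln (1 / x') powr (\<beta> - 1) * (ln (1 / x') - \<beta>)"
    if "0 < x'" "x' \<le> y'" "y' \<le> ?v0" for x' y'
  proof -
    have "\<beta> \<le> ln (1 / y')" using le_ln_inverse_if_le_switch_point that by simp
    moreover have "ln (1 / y') \<le> ln (1 / x')" using that by (simp add: ln_div)
    ultimately show ?thesis using \<beta> by (intro mult_mono powr_mono2) auto
  qed
  define C where "C = power_coeff \<beta> n * (real (n - 1) / real n)"
  define e where "e = real (n - 1) / real n - 1"
  have deriv_power: "isoprofile_deriv \<beta> n z = C * z powr e" if "?v0 < z" for z
    using that by (simp add: isoprofile_deriv_def C_def e_def)
  have pow: "C * y' powr e \<le> C * x' powr e" if "0 < x'" "x' \<le> y'" for x' y'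
    using that n by (intro mult_left_mono powr_mono2') (auto simp: C_def e_def power_coeff_def of_nat_diff)
  consider "y \<le> ?v0" | "?v0 < x" | "x \<le> ?v0" "?v0 < y" by linarith
  then show ?thesis
  proof cases
    case 1
    then show ?thesis using log assms by (simp add: isoprofile_deriv_def)
  next
    case 2
    then show ?thesis using pow assms deriv_power by simp
  next
    case 3
    have "isoprofile_deriv \<beta> n y \<le> isoprofile_deriv \<beta> n ?v0"
      using pow[of ?v0 y] 3 switch_point_pos deriv_power power_deriv_switch_point
      by (simp add: C_def e_def)
    also have "\<dots> \<le> isoprofile_deriv \<beta> n x"
      using log[of x ?v0] 3 assms by (simp add: isoprofile_deriv_def)
    finally show ?thesis .
  qed
qed

lemma isoprofile_deriv_nonneg:
  assumes "0 < v"
  shows "0 \<le> isoprofile_deriv \<beta> n v"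
proof (cases "v \<le> switch_point \<beta> n")
  case True
  then have "\<beta> \<le> ln (1 / v)" using le_ln_inverse_if_le_switch_point assms by simp
  then show ?thesis using True by (simp add: isoprofile_deriv_def)
qed (use n in \<open>simp add: isoprofile_deriv_def power_coeff_def\<close>)

lemma isoprofile_concave: "concave_on {0<..} (isoprofile \<beta> n)"
proof -
  have "convex_on {0<..} (\<lambda>v. - isoprofile \<beta> n v)"
    by (rule convex_on_realI[where f' = "\<lambda>v. - isoprofile_deriv \<beta> n v"])
       (auto intro: DERIV_minus isoprofile_has_real_derivative isoprofile_deriv_antimono)
  then show ?thesis by (simp add: concave_on_def)
qed

lemma isoprofile_continuous: "continuous_on {0<..} (isoprofile \<beta> n)"
  by (rule DERIV_continuous_on, rule has_field_derivative_at_within,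
      rule isoprofile_has_real_derivative) simp

text \<open>Here ln (1 / 0) = ln 0 = 0 in HOL, so the logarithmic branch vanishes at 0.\<close>

lemma isoprofile_zero: "isoprofile \<beta> n 0 = 0"
  using switch_point_pos by (simp add: isoprofile_def log_branch_def)

lemma isoprofile_nonneg: "0 \<le> v \<Longrightarrow> 0 \<le> isoprofile \<beta> n v"
  by (simp add: isoprofile_def log_branch_def power_branch_def power_coeff_def)

lemma isoprofile_mono: "mono_on {0..} (isoprofile \<beta> n)"
proof (rule mono_onI)
  fix x y :: real
  assume "x \<in> {0..}" "y \<in> {0..}" "x \<le> y"
  show "isoprofile \<beta> n x \<le> isoprofile \<beta> n y"
  proof (cases "x = 0")
    case True
    then show ?thesis using isoprofile_zero isoprofile_nonneg \<open>y \<in> {0..}\<close> by simp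
  next
    case False
    with \<open>x \<in> {0..}\<close> have "0 < x" by simp
    show ?thesis
    proof (rule DERIV_nonneg_imp_increasing_open[OF \<open>x \<le> y\<close>])
      show "continuous_on {x..y} (isoprofile \<beta> n)"
        by (rule continuous_on_subset[OF isoprofile_continuous]) (use \<open>0 < x\<close> in auto)
      show "\<exists>D. (isoprofile \<beta> n has_real_derivative D) (at z) \<and> 0 \<le> D" if "x < z" for z
      proof -
        have "0 < z" using that \<open>0 < x\<close> by simp
        then show ?thesis using isoprofile_has_real_derivative isoprofile_deriv_nonneg by blast
      qed
    qed
  qed
qed

lemma isoprofile_le_power_branch:
  assumes "0 \<le> v"
  shows "isoprofile \<beta> n v \<le> power_branch \<beta> n v"
proof (cases "0 < v \<and> v \<le> switch_point \<beta> n")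
  case True
  define L where "L = ln (1 / v)"
  have v_eq: "v = v powr (real (n - 1) / real n) * exp (- L / real n)"
  proof -
    have "real (n - 1) / real n + 1 / real n = 1" using n by (simp add: of_nat_diff field_simps)
    then have "v powr (real (n - 1) / real n) * v powr (1 / real n) = v"
      using True by (simp add: powr_add[symmetric])
    moreover have "v powr (1 / real n) = exp (- L / real n)"
      using True by (simp add: powr_def L_def ln_div)
    ultimately show ?thesis by simp
  qed
  have "L powr \<beta> * exp (- L / real n) \<le> (real n * \<beta>) powr \<beta> * exp (- (real n * \<beta>) / real n)"
    by (rule powr_mult_exp_antimono)
       (use \<beta> n ln_inverse_ge_if_le_switch_point True in \<open>auto simp: L_def\<close>)
  also have "\<dots> = power_coeff \<beta> n" using n by (simp add: power_coeff_def)
  finally have L_le: "L powr \<beta> * exp (- L / real n) \<le> power_coeff \<beta> n" .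
  have "v * L powr \<beta> = v powr (real (n - 1) / real n) * exp (- L / real n) * L powr \<beta>"
    using v_eq by (rule arg_cong[where f = "\<lambda>x. x * L powr \<beta>"])
  also have "\<dots> = v powr (real (n - 1) / real n) * (L powr \<beta> * exp (- L / real n))"
    by (simp only: mult_ac)
  also have "\<dots> \<le> v powr (real (n - 1) / real n) * power_coeff \<beta> n"
    using L_le by (rule mult_left_mono) simp
  finally have "v * L powr \<beta> \<le> v powr (real (n - 1) / real n) * power_coeff \<beta> n" .
  then show ?thesis using True by (simp add: isoprofile_def log_branch_def power_branch_def L_def mult.commute)
next
  case False
  with assms show ?thesis
    by (cases "v = 0") (auto simp: isoprofile_def log_branch_def power_branch_def power_coeff_def)
qed

lemma power_branch_le_linear:
  assumes "switch_point \<beta> n \<le> v"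
  shows "power_branch \<beta> n v \<le> (real n * \<beta>) powr \<beta> * v"
proof -
  have "exp (- \<beta>) = switch_point \<beta> n powr (1 / real n)"
    using n by (simp add: switch_point_def powr_def)
  also have "\<dots> \<le> v powr (1 / real n)"
    using assms switch_point_pos by (intro powr_mono2) auto
  finally have "exp (- \<beta>) * v powr (real (n - 1) / real n)
      \<le> v powr (1 / real n) * v powr (real (n - 1) / real n)"
    by (rule mult_right_mono) simp
  also have "\<dots> = v"
    using assms switch_point_pos n by (simp add: powr_add[symmetric] of_nat_diff field_simps)
  finally have "exp (- \<beta>) * v powr (real (n - 1) / real n) \<le> v" .
  then show ?thesis
    unfolding power_branch_def power_coeff_def mult.assoc by (rule mult_left_mono) simp
qed

end

section \<open>Measures with increasing density on the half-line\<close>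

lemma open_nbhd: "open (nbhd A r)"
proof -
  have "nbhd A r = (\<Union>a\<in>A. ball a r)" by (auto simp: nbhd_def mem_ball dist_commute)
  then show ?thesis by auto
qed

lemma nbhd_in_borel [measurable]: "nbhd A r \<in> sets borel"
  by (simp add: open_nbhd borel_open)

lemma subset_nbhd: "0 < r \<Longrightarrow> A \<subseteq> nbhd A r"
  by (auto simp: nbhd_def intro!: bexI)

lemma greaterThanLessThan_Sup_subset_nbhd:
  fixes A :: "real set"
  assumes "A \<noteq> {}" "bdd_above A"
  shows "{Sup A<..<Sup A + r} \<subseteq> nbhd A r"
proof
  fix x assume x: "x \<in> {Sup A<..<Sup A + r}"
  then obtain a where "a \<in> A" "x - r < a" using less_cSupD[OF assms(1)] by force
  moreover have "a \<le> Sup A" using cSup_upper[OF \<open>a \<in> A\<close> assms(2)] .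
  ultimately show "x \<in> nbhd A r" using x by (auto simp: nbhd_def dist_real_def intro!: bexI[of _ a])
qed

lemma zero_less_cSup:
  fixes A :: "real set"
  assumes "A \<subseteq> {0<..}" "A \<noteq> {}" "bdd_above A"
  shows "0 < Sup A"
  using assms by (metis all_not_in_conv cSup_upper greaterThan_iff less_le_trans subsetD)

lemma infinite_if_ennreal_multiples_le:
  assumes "\<And>N. ennreal (real N * c) \<le> X" and "0 < c"
  shows "X = \<infinity>"
proof (rule ccontr)
  assume "X \<noteq> \<infinity>"
  then obtain m where m: "X = ennreal m" "0 \<le> m" by (cases X rule: ennreal_cases) auto
  obtain N :: nat where "m / c < real N" using reals_Archimedean2 by blast
  then have "m < real N * c" using \<open>0 < c\<close> by (simp add: field_simps)
  moreover have "real N * c \<le> m" using assms(1)[of N] m \<open>0 < c\<close> by (simp add: ennreal_le_iff)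
  ultimately show False by simp
qed

lemma boundary_measure_geI:
  assumes "emeasure M A < \<infinity>" "0 \<le> c"
    and "\<forall>\<^sub>F r in at_right 0. emeasure M A + ennreal (r * c) \<le> emeasure M (nbhd A r)"
  shows "ereal c \<le> boundary_measure M A"
  unfolding boundary_measure_def
proof (rule Liminf_bounded)
  show "\<forall>\<^sub>F r in at_right 0.
      ereal c \<le> (enn2ereal (emeasure M (nbhd A r)) - enn2ereal (emeasure M A)) / ereal r"
    using assms(3) eventually_at_right_less[of "0::real"]
  proof eventually_elim
    case (elim r)
    obtain v where v: "emeasure M A = ennreal v" "0 \<le> v"
      using assms(1) by (cases "emeasure M A" rule: ennreal_cases) auto
    show ?case
    proof (cases "emeasure M (nbhd A r)" rule: ennreal_cases)
      case (real m)
      have "ennreal (v + r * c) = emeasure M A + ennreal (r * c)"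
        using v elim assms(2) by (simp add: ennreal_plus)
      then have "ennreal (v + r * c) \<le> ennreal m" using elim(1) real by simp
      then have "v + r * c \<le> m" using real by (simp add: ennreal_le_iff)
      then have "c \<le> (m - v) / r" using elim by (simp add: field_simps)
      then show ?thesis using real v elim by (simp add: ereal_divide)
    next
      case top
      then show ?thesis using v elim by simp
    qed
  qed
qed

definition halfline_measure :: "(real \<Rightarrow> real) \<Rightarrow> real measure" where
  "halfline_measure f = density lborel (\<lambda>r. if 0 < r then ennreal (f r) else 0)"

locale increasing_density =
  fixes f :: "real \<Rightarrow> real"
  assumes borel_measurable_density: "f \<in> borel_measurable borel"
    and density_pos: "\<And>r. 0 < r \<Longrightarrow> 0 < f r"
    and density_mono: "mono_on {0<..} f"
begin

declare borel_measurable_density [measurable]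

lemma density_le: "0 < x \<Longrightarrow> x \<le> y \<Longrightarrow> f x \<le> f y"
  by (rule mono_onD[OF density_mono]) auto

abbreviation \<mu> :: "real measure" where
  "\<mu> \<equiv> halfline_measure f"

lemma sets_\<mu> [simp, measurable_cong]: "sets \<mu> = sets borel"
  by (simp add: halfline_measure_def)

lemma emeasure_\<mu>:
  "A \<in> sets borel \<Longrightarrow>
     emeasure \<mu> A = (\<integral>\<^sup>+ x. (if 0 < x then ennreal (f x) else 0) * indicator A x \<partial>lborel)"
  unfolding halfline_measure_def by (rule emeasure_density) auto

lemma emeasure_\<mu>_greaterThanAtMost_le:
  assumes "0 < s"
  shows "emeasure \<mu> {0<..s} \<le> ennreal (s * f s)"
proof -
  have "emeasure \<mu> {0<..s} \<le> (\<integral>\<^sup>+ x. ennreal (f s) * indicator {0<..s} x \<partial>lborel)"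
    unfolding emeasure_\<mu>[of "{0<..s}", simplified]
  proof (rule nn_integral_mono)
    fix x :: real
    show "(if 0 < x then ennreal (f x) else 0) * indicator {0<..s} x
        \<le> ennreal (f s) * indicator {0<..s} x"
      by (auto simp: indicator_def intro!: ennreal_leI density_le)
  qed
  also have "\<dots> = ennreal (s * f s)"
    using assms density_pos[OF assms]
    by (subst nn_integral_cmult_indicator) (auto simp: ennreal_mult mult.commute)
  finally show ?thesis .
qed

lemma emeasure_\<mu>_greaterThanLessThan_ge:
  assumes "0 < s" "0 \<le> r"
  shows "ennreal (r * f s) \<le> emeasure \<mu> {s<..<s + r}"
proof -
  have "ennreal (r * f s) = (\<integral>\<^sup>+ x. ennreal (f s) * indicator {s<..<s + r} x \<partial>lborel)"
    using assms density_pos[OF assms(1)]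
    by (subst nn_integral_cmult_indicator) (auto simp: ennreal_mult mult.commute)
  also have "\<dots> \<le> emeasure \<mu> {s<..<s + r}"
    unfolding emeasure_\<mu>[of "{s<..<s + r}", simplified]
  proof (rule nn_integral_mono)
    fix x :: real
    show "ennreal (f s) * indicator {s<..<s + r} x
        \<le> (if 0 < x then ennreal (f x) else 0) * indicator {s<..<s + r} x"
      using assms by (auto simp: indicator_def intro!: ennreal_leI density_le)
  qed
  finally show ?thesis .
qed

text \<open>Each of the N steps uses a fresh interval (a, a + r) with a \<in> A beyond the previous one.\<close>

lemma emeasure_\<mu>_nbhd_inter_greaterThan_ge:
  assumes "\<not> bdd_above A" "0 < r" "1 \<le> x"
  shows "ennreal (real N * (r * f 1)) \<le> emeasure \<mu> (nbhd A r \<inter> {x<..})"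
  using assms(3)
proof (induction N arbitrary: x)
  case (Suc N)
  obtain a where "a \<in> A" "x < a" using assms(1) by (meson bdd_above.I linorder_not_le)
  have sub: "{a<..<a + r} \<union> (nbhd A r \<inter> {a + r<..}) \<subseteq> nbhd A r \<inter> {x<..}"
    using \<open>a \<in> A\<close> \<open>x < a\<close> assms(2) by (auto simp: nbhd_def dist_real_def intro!: bexI[of _ a])
  have "ennreal (real (Suc N) * (r * f 1)) = ennreal (r * f 1) + ennreal (real N * (r * f 1))"
    using assms(2) density_pos[of 1] by (subst ennreal_plus[symmetric]) (auto simp: algebra_simps)
  also have "\<dots> \<le> emeasure \<mu> {a<..<a + r} + emeasure \<mu> (nbhd A r \<inter> {a + r<..})"
  proof (rule add_mono)
    have "r * f 1 \<le> r * f a"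
      using density_le[of 1 a] Suc.prems \<open>x < a\<close> assms(2) by (intro mult_left_mono) auto
    also have "ennreal (r * f a) \<le> emeasure \<mu> {a<..<a + r}"
      using emeasure_\<mu>_greaterThanLessThan_ge[of a r] Suc.prems \<open>x < a\<close> assms(2) by simp
    finally show "ennreal (r * f 1) \<le> emeasure \<mu> {a<..<a + r}" by (simp add: ennreal_leI)
    show "ennreal (real N * (r * f 1)) \<le> emeasure \<mu> (nbhd A r \<inter> {a + r<..})"
      by (rule Suc.IH) (use Suc.prems \<open>x < a\<close> assms(2) in linarith)
  qed
  also have "\<dots> = emeasure \<mu> ({a<..<a + r} \<union> (nbhd A r \<inter> {a + r<..}))"
    by (rule plus_emeasure) auto
  also have "\<dots> \<le> emeasure \<mu> (nbhd A r \<inter> {x<..})"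
    by (rule emeasure_mono[OF sub]) measurable
  finally show ?case .
qed simp

lemma emeasure_\<mu>_nbhd_unbounded:
  assumes "\<not> bdd_above A" "0 < r"
  shows "emeasure \<mu> (nbhd A r) = \<infinity>"
proof (rule infinite_if_ennreal_multiples_le)
  show "ennreal (real N * (r * f 1)) \<le> emeasure \<mu> (nbhd A r)" for N
    using emeasure_\<mu>_nbhd_inter_greaterThan_ge[OF assms order.refl, of N]
      emeasure_mono[of "nbhd A r \<inter> {1<..}" "nbhd A r" \<mu>]
    by (auto intro: order.trans)
  show "0 < r * f 1" using assms(2) density_pos[of 1] by simp
qed

lemma emeasure_\<mu>_nbhd_ge:
  assumes A: "A \<in> sets borel" "A \<subseteq> {0<..}" "A \<noteq> {}" "bdd_above A" and "0 < r"
  shows "emeasure \<mu> A + ennreal (r * f (Sup A)) \<le> emeasure \<mu> (nbhd A r)"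
proof -
  have "0 < Sup A" using zero_less_cSup[OF A(2,3,4)] .
  have disj: "A \<inter> {Sup A<..<Sup A + r} = {}" using cSup_upper[OF _ A(4)] by fastforce
  have "emeasure \<mu> A + ennreal (r * f (Sup A)) \<le> emeasure \<mu> A + emeasure \<mu> {Sup A<..<Sup A + r}"
    using emeasure_\<mu>_greaterThanLessThan_ge[OF \<open>0 < Sup A\<close>, of r] \<open>0 < r\<close> by (simp add: add_left_mono)
  also have "\<dots> = emeasure \<mu> (A \<union> {Sup A<..<Sup A + r})"
    using A(1) disj by (intro plus_emeasure) auto
  also have "\<dots> \<le> emeasure \<mu> (nbhd A r)"
    using subset_nbhd[OF \<open>0 < r\<close>] greaterThanLessThan_Sup_subset_nbhd[OF A(3,4)]
    by (intro emeasure_mono) auto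
  finally show ?thesis .
qed

theorem lower_isoperimetricI:
  assumes J_mono: "mono_on {0..} J" and J_zero: "J 0 \<le> 0"
    and J_le: "\<And>s. 0 < s \<Longrightarrow> J (measure \<mu> {0<..s}) \<le> f s"
  shows "lower_isoperimetric \<mu> J"
  unfolding lower_isoperimetric_def
proof (intro allI impI)
  fix A :: "real set"
  assume A: "A \<in> sets borel" "A \<subseteq> {0<..}" "emeasure \<mu> A < \<infinity>"
  consider "A = {}" | "\<not> bdd_above A" | "A \<noteq> {}" "bdd_above A" by blast
  then show "ereal (J (measure \<mu> A)) \<le> boundary_measure \<mu> A"
  proof cases
    case 1
    have "ereal (J (measure \<mu> A)) \<le> ereal 0" using 1 J_zero by simp
    also have "\<dots> \<le> boundary_measure \<mu> A"
      by (rule boundary_measure_geI) (use A 1 in auto)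
    finally show ?thesis .
  next
    case 2
    have "ereal (max 0 (J (measure \<mu> A))) \<le> boundary_measure \<mu> A"
      by (rule boundary_measure_geI)
         (use A emeasure_\<mu>_nbhd_unbounded[OF 2] in
           \<open>auto intro: eventually_mono[OF eventually_at_right_less]\<close>)
    then show ?thesis by (meson ereal_less_eq(3) max.cobounded2 order.trans)
  next
    case 3
    define s where "s = Sup A"
    have "0 < s" using zero_less_cSup[OF A(2) 3] by (simp add: s_def)
    have "{0<..s} \<in> fmeasurable \<mu>"
      using emeasure_\<mu>_greaterThanAtMost_le[OF \<open>0 < s\<close>]
      by (intro fmeasurableI) (auto simp: top.not_eq_extremum le_less_trans)
    then have "measure \<mu> A \<le> measure \<mu> {0<..s}"
      using A cSup_upper[OF _ 3(2)] by (intro measure_mono_fmeasurable) (auto simp: s_def)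
    then have "J (measure \<mu> A) \<le> f s"
      using J_le[OF \<open>0 < s\<close>] mono_onD[OF J_mono] by (meson atLeast_iff measure_nonneg order.trans)
    moreover have "ereal (f s) \<le> boundary_measure \<mu> A"
    proof (rule boundary_measure_geI)
      show "\<forall>\<^sub>F r in at_right 0. emeasure \<mu> A + ennreal (r * f s) \<le> emeasure \<mu> (nbhd A r)"
        using eventually_at_right_less
        by (rule eventually_mono) (use emeasure_\<mu>_nbhd_ge[OF A(1,2) 3] in \<open>simp add: s_def\<close>)
    qed (use A(3) density_pos[OF \<open>0 < s\<close>] in auto)
    ultimately show ?thesis by (meson ereal_less_eq(3) order.trans)
  qed
qed

end

section \<open>The measure r^(n-1) exp(-r^(-alpha)) dr\<close>

definition nu_density :: "real \<Rightarrow> nat \<Rightarrow> real \<Rightarrow> real" where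
  "nu_density \<alpha> n r = r ^ (n - 1) * exp (- 1 / r powr \<alpha>)"

lemma nu_meas_eq_halfline_measure: "nu_meas \<alpha> n = halfline_measure (nu_density \<alpha> n)"
  unfolding nu_meas_def halfline_measure_def nu_density_def ..

lemma tendsto_exp_neg_powr_at_right_0:
  fixes \<alpha> :: real
  assumes "0 < \<alpha>"
  shows "((\<lambda>t. exp (- (t powr (- \<alpha>)))) \<longlongrightarrow> 0) (at_right 0)"
proof (rule tendsto_sandwich[where f = "\<lambda>_. 0" and h = "\<lambda>t. t powr \<alpha>"])
  show "((\<lambda>t. t powr \<alpha>) \<longlongrightarrow> 0) (at_right 0)"
    by (rule tendsto_zero_powrI[OF tendsto_ident_at tendsto_const _ assms])
       (auto intro: eventually_mono[OF eventually_at_right_less])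
  show "\<forall>\<^sub>F t in at_right 0. exp (- (t powr (- \<alpha>))) \<le> t powr \<alpha>"
    using eventually_at_right_less
  proof (rule eventually_mono)
    fix t :: real
    assume "0 < t"
    have "t powr (- \<alpha>) \<le> exp (t powr (- \<alpha>))"
      using exp_ge_add_one_self[of "t powr (- \<alpha>)"] by linarith
    then show "exp (- (t powr (- \<alpha>))) \<le> t powr \<alpha>"
      using \<open>0 < t\<close> by (simp add: exp_minus powr_minus field_simps)
  qed
qed auto

lemma exp_neg_powr_has_real_derivative:
  fixes \<alpha> t :: real
  assumes "0 < t"
  shows "((\<lambda>t. if 0 < t then exp (- (t powr (- \<alpha>))) else 0) has_real_derivative
           \<alpha> * t powr (- \<alpha> - 1) * exp (- (t powr (- \<alpha>)))) (at t)"
proof -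
  have "((\<lambda>t. exp (- (t powr (- \<alpha>)))) has_real_derivative
           \<alpha> * t powr (- \<alpha> - 1) * exp (- (t powr (- \<alpha>)))) (at t)"
    using assms by (auto intro!: derivative_eq_intros simp: algebra_simps)
  then show ?thesis
    by (rule has_field_derivative_transform_within_open[where S = "{0<..}"]) (use assms in auto)
qed

lemma continuous_on_exp_neg_powr:
  fixes \<alpha> s :: real
  assumes "0 < \<alpha>" "0 < s"
  shows "continuous_on {0..s} (\<lambda>t. if 0 < t then exp (- (t powr (- \<alpha>))) else 0)"
  unfolding continuous_on_eq_continuous_within
proof
  fix t assume "t \<in> {0..s}"
  show "continuous (at t within {0..s}) (\<lambda>t. if 0 < t then exp (- (t powr (- \<alpha>))) else 0)"
  proof (cases "t = 0")
    case True
    have "((\<lambda>t. if 0 < t then exp (- (t powr (- \<alpha>))) else 0) \<longlongrightarrow> 0) (at_right 0)"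
      using tendsto_exp_neg_powr_at_right_0[OF assms(1)]
      by (rule Lim_transform_eventually) (auto intro: eventually_mono[OF eventually_at_right_less])
    then show ?thesis using True by (simp add: continuous_within at_within_Icc_at_right[OF assms(2)])
  next
    case False
    then have "0 < t" using \<open>t \<in> {0..s}\<close> by simp
    then show ?thesis
      by (rule continuous_at_imp_continuous_within[OF DERIV_isCont[OF exp_neg_powr_has_real_derivative]])
  qed
qed

lemma nn_integral_exp_neg_powr_derivative:
  fixes \<alpha> s :: real
  assumes "0 < \<alpha>" "0 < s"
  shows "(\<integral>\<^sup>+ x. ennreal (\<alpha> * x powr (- \<alpha> - 1) * exp (- (x powr (- \<alpha>)))) * indicator {0<..s} x \<partial>lborel)
    = ennreal (exp (- (s powr (- \<alpha>))))"
proof -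
  define G where "G t = (if 0 < t then exp (- (t powr (- \<alpha>))) else 0)" for t :: real
  define g where "g t = (if 0 < t then \<alpha> * t powr (- \<alpha> - 1) * exp (- (t powr (- \<alpha>))) else 0)"
    for t :: real
  have "(g has_integral G s - G 0) {0..s}"
    using assms continuous_on_exp_neg_powr[OF assms] exp_neg_powr_has_real_derivative
    by (intro fundamental_theorem_of_calculus_interior)
       (auto simp: G_def g_def has_real_derivative_iff_has_vector_derivative[symmetric])
  then have "(g has_integral G s) {0..s}" by (simp add: G_def)
  then have int: "((\<lambda>x. g x * indicator {0..s} x) has_integral G s) UNIV"
    by (simp only: indicator_times_eq_if has_integral_restrict_UNIV)
  have meas: "(\<lambda>x. g x * indicator {0..s} x) \<in> borel_measurable borel"
    unfolding g_def by measurable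
  have nonneg: "0 \<le> g x * indicator {0..s} x" for x
    using assms(1) by (simp add: g_def indicator_def)
  have "(\<integral>\<^sup>+ x. ennreal (g x * indicator {0..s} x) \<partial>lborel) = ennreal (G s)"
    using nn_integral_has_integral_lborel[OF meas nonneg int] .
  moreover have "ennreal (g x * indicator {0..s} x)
      = ennreal (\<alpha> * x powr (- \<alpha> - 1) * exp (- (x powr (- \<alpha>)))) * indicator {0<..s} x" for x
    by (simp add: g_def indicator_def)
  ultimately show ?thesis using assms(2) by (simp add: G_def)
qed

text \<open>The first summand serves the sets with sup A >= 1, the second those with sup A <= 1.\<close>

definition nu_profile_constant :: "real \<Rightarrow> nat \<Rightarrow> real" where
  "nu_profile_constant \<alpha> n =
     (let \<beta> = 1 + 1 / \<alpha>
      in exp 1 * power_coeff \<beta> n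
         + ((1 + (\<alpha> + real n) / \<alpha> + \<bar>ln \<alpha>\<bar>) powr \<beta> + (real n * \<beta>) powr \<beta>) / \<alpha>)"

context
  fixes \<alpha> :: real and n :: nat
  assumes \<alpha>: "0 < \<alpha>" and n: "1 \<le> n"
begin

lemma increasing_density_nu: "increasing_density (nu_density \<alpha> n)"
proof
  show "nu_density \<alpha> n \<in> borel_measurable borel"
    unfolding nu_density_def by measurable
  show "0 < nu_density \<alpha> n r" if "0 < r" for r
    using that by (simp add: nu_density_def)
  show "mono_on {0<..} (nu_density \<alpha> n)"
  proof (rule mono_onI)
    fix r s :: real
    assume "r \<in> {0<..}" "r \<le> s"
    then have "r powr \<alpha> \<le> s powr \<alpha>" "0 < r powr \<alpha>" using \<alpha> by (auto intro: powr_mono2)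
    then have "exp (- 1 / r powr \<alpha>) \<le> exp (- 1 / s powr \<alpha>)" by (simp add: frac_le)
    moreover have "r ^ (n - 1) \<le> s ^ (n - 1)" using \<open>r \<in> {0<..}\<close> \<open>r \<le> s\<close> by (intro power_mono) auto
    ultimately show "nu_density \<alpha> n r \<le> nu_density \<alpha> n s"
      unfolding nu_density_def using \<open>r \<in> {0<..}\<close> \<open>r \<le> s\<close> by (intro mult_mono) auto
  qed
qed

lemma nu_density_le_power: "0 < s \<Longrightarrow> nu_density \<alpha> n s \<le> s ^ (n - 1)"
  by (simp add: nu_density_def mult_left_le)

lemma power_le_nu_density:
  assumes "1 \<le> s"
  shows "s ^ (n - 1) \<le> exp 1 * nu_density \<alpha> n s"
proof -
  have "1 \<le> s powr \<alpha>" using assms \<alpha> by (simp add: ge_one_powr_ge_zero)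
  then have "1 / s powr \<alpha> \<le> 1" by (simp add: divide_le_eq_1)
  then have "exp (- 1) \<le> exp (- 1 / s powr \<alpha>)" by simp
  then have "s ^ (n - 1) * exp (- 1) \<le> nu_density \<alpha> n s"
    unfolding nu_density_def using assms by (intro mult_left_mono) auto
  then show ?thesis by (simp add: exp_minus field_simps)
qed

text \<open>On (0, s] the density is at most s^(n+alpha)/alpha times the derivative of exp(-t^(-alpha)).\<close>

lemma emeasure_nu_meas_greaterThanAtMost_le:
  assumes "0 < s"
  shows "emeasure (nu_meas \<alpha> n) {0<..s} \<le> ennreal (s powr (\<alpha> + 1) * nu_density \<alpha> n s / \<alpha>)"
proof -
  define C where "C = s powr (real n + \<alpha>) / \<alpha>"
  have "0 < C" using assms \<alpha> by (simp add: C_def)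
  have "emeasure (nu_meas \<alpha> n) {0<..s}
      \<le> (\<integral>\<^sup>+ x. ennreal C *
            (ennreal (\<alpha> * x powr (- \<alpha> - 1) * exp (- (x powr (- \<alpha>)))) * indicator {0<..s} x) \<partial>lborel)"
    unfolding nu_meas_def
  proof (subst emeasure_density, (measurable; fail), simp, rule nn_integral_mono)
    fix x :: real
    show "(if 0 < x then ennreal (x ^ (n - 1) * exp (- 1 / x powr \<alpha>)) else 0) * indicator {0<..s} x
        \<le> ennreal C * (ennreal (\<alpha> * x powr (- \<alpha> - 1) * exp (- (x powr (- \<alpha>)))) * indicator {0<..s} x)"
    proof (cases "0 < x \<and> x \<le> s")
      case True
      have "x ^ (n - 1) = x powr (real n + \<alpha>) * x powr (- \<alpha> - 1)"
        using True n by (simp add: powr_add[symmetric] powr_realpow[symmetric] of_nat_diff)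
      also have "\<dots> \<le> C * (\<alpha> * x powr (- \<alpha> - 1))"
        using True \<alpha> by (simp add: C_def mult_right_mono powr_mono2)
      finally have "x ^ (n - 1) * exp (- 1 / x powr \<alpha>) \<le> C * (\<alpha> * x powr (- \<alpha> - 1) * exp (- (x powr (- \<alpha>))))"
        using True by (simp add: powr_minus_divide mult_right_mono mult.assoc)
      then show ?thesis
        using True \<open>0 < C\<close> \<alpha> by (simp add: ennreal_mult[symmetric] ennreal_leI)
    qed (auto simp: indicator_def)
  qed
  also have "\<dots> = ennreal C * ennreal (exp (- (s powr (- \<alpha>))))"
    by (subst nn_integral_cmult) (auto simp: nn_integral_exp_neg_powr_derivative[OF \<alpha> assms])
  also have "\<dots> = ennreal (s powr (\<alpha> + 1) * nu_density \<alpha> n s / \<alpha>)"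
  proof -
    have "s powr (\<alpha> + 1) * s ^ (n - 1) = s powr (real n + \<alpha>)"
      using assms n by (simp add: powr_add[symmetric] powr_realpow[symmetric] of_nat_diff add.commute)
    then have "C * exp (- (s powr (- \<alpha>))) = s powr (\<alpha> + 1) * nu_density \<alpha> n s / \<alpha>"
      using assms by (simp add: C_def nu_density_def powr_minus_divide mult.assoc[symmetric])
    then show ?thesis using \<open>0 < C\<close> by (simp add: ennreal_mult[symmetric])
  qed
  finally show ?thesis .
qed

lemma ln_inverse_nu_mass_bound_le:
  assumes "0 < s" "s \<le> 1"
  shows "ln (1 / (s powr (\<alpha> + 1) * nu_density \<alpha> n s / \<alpha>))
    \<le> (1 + (\<alpha> + real n) / \<alpha> + \<bar>ln \<alpha>\<bar>) * s powr (- \<alpha>)"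
proof -
  define u where "u = s powr (- \<alpha>)"
  have "s powr \<alpha> \<le> 1" using assms \<alpha> powr_mono2[of \<alpha> s 1] by simp
  then have "1 \<le> u" using assms by (simp add: u_def powr_minus_divide)
  have "- \<alpha> * ln s \<le> u"
    using ln_le_minus_one[of u] \<open>1 \<le> u\<close> assms by (simp add: u_def ln_powr)
  then have "- ln s \<le> u / \<alpha>" using \<alpha> by (simp add: field_simps)
  then have "(\<alpha> + real n) * (- ln s) \<le> (\<alpha> + real n) * (u / \<alpha>)"
    using \<alpha> by (intro mult_left_mono) auto
  then have "- ((\<alpha> + real n) * ln s) \<le> (\<alpha> + real n) / \<alpha> * u" by simp
  moreover have "ln \<alpha> \<le> \<bar>ln \<alpha>\<bar> * u"
    using mult_left_mono[OF \<open>1 \<le> u\<close>, of "\<bar>ln \<alpha>\<bar>"] abs_ge_self[of "ln \<alpha>"] by simp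
  moreover have "ln (1 / (s powr (\<alpha> + 1) * nu_density \<alpha> n s / \<alpha>)) = u - (\<alpha> + real n) * ln s + ln \<alpha>"
  proof -
    define w where "w = s powr (\<alpha> + 1) * nu_density \<alpha> n s / \<alpha>"
    have "ln w = (\<alpha> + 1) * ln s + real (n - 1) * ln s - u - ln \<alpha>"
      using assms \<alpha>
      by (simp add: w_def nu_density_def ln_mult ln_div ln_realpow ln_powr u_def powr_minus_divide)
    moreover have "0 < w" using assms \<alpha> by (simp add: w_def nu_density_def)
    then have "ln (1 / w) = - ln w" by (simp add: ln_div)
    moreover have "(\<alpha> + 1) * ln s + real (n - 1) * ln s = (\<alpha> + real n) * ln s"
      using n by (simp add: of_nat_diff algebra_simps)
    ultimately show ?thesis unfolding w_def by linarith
  qed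
  ultimately show ?thesis unfolding u_def[symmetric] by (simp only: distrib_right mult_1)
qed

lemma isoprofile_le_nu_density_if_ge_one:
  assumes \<beta>: "1 \<le> \<beta>" and "1 \<le> s" "0 \<le> v" "v \<le> s * nu_density \<alpha> n s"
  shows "isoprofile \<beta> n v \<le> exp 1 * power_coeff \<beta> n * nu_density \<alpha> n s"
proof -
  define \<gamma> where "\<gamma> = real (n - 1) / real n"
  have "s * nu_density \<alpha> n s \<le> s * s ^ (n - 1)"
    using assms(2) nu_density_le_power[of s] by (intro mult_left_mono) auto
  then have "v \<le> s * s ^ (n - 1)" using assms(4) by linarith
  also have "s * s ^ (n - 1) = s ^ n" using n by (cases n) auto
  finally have "v \<le> s ^ n" .
  define c where "c = power_coeff \<beta> n"
  have "0 \<le> c" by (simp add: c_def power_coeff_def)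
  have "isoprofile \<beta> n v \<le> c * v powr \<gamma>"
    using isoprofile_le_power_branch[OF \<beta> n \<open>0 \<le> v\<close>] by (simp add: power_branch_def c_def \<gamma>_def)
  also have "\<dots> \<le> c * (s ^ n) powr \<gamma>"
    using \<open>0 \<le> v\<close> \<open>v \<le> s ^ n\<close> \<open>0 \<le> c\<close> by (intro mult_left_mono powr_mono2) (auto simp: \<gamma>_def)
  also have "(s ^ n) powr \<gamma> = s ^ (n - 1)"
    using assms(2) n by (simp add: \<gamma>_def powr_realpow[symmetric] powr_powr of_nat_diff)
  also have "c * s ^ (n - 1) \<le> c * (exp 1 * nu_density \<alpha> n s)"
    using power_le_nu_density[OF assms(2)] \<open>0 \<le> c\<close> by (rule mult_left_mono)
  finally show ?thesis by (simp add: c_def mult_ac)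
qed

lemma isoprofile_le_nu_density_if_le_one:
  assumes "0 < s" "s \<le> 1" "0 \<le> v" "v \<le> s powr (\<alpha> + 1) * nu_density \<alpha> n s / \<alpha>"
  defines "\<beta> \<equiv> 1 + 1 / \<alpha>"
  shows "isoprofile \<beta> n v
    \<le> ((1 + (\<alpha> + real n) / \<alpha> + \<bar>ln \<alpha>\<bar>) powr \<beta> + (real n * \<beta>) powr \<beta>) / \<alpha> * nu_density \<alpha> n s"
proof -
  define w where "w = s powr (\<alpha> + 1) * nu_density \<alpha> n s / \<alpha>"
  define u where "u = s powr (- \<alpha>)"
  define C where "C = 1 + (\<alpha> + real n) / \<alpha> + \<bar>ln \<alpha>\<bar>"
  let ?p = "nu_density \<alpha> n s"
  have \<beta>: "1 \<le> \<beta>" using \<alpha> by (simp add: \<beta>_def)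
  have "0 < w" "0 < ?p" using assms(1) \<alpha> by (simp_all add: w_def nu_density_def)
  have "s powr (\<alpha> + 1) \<le> 1" using assms(1,2) \<alpha> powr_mono2[of "\<alpha> + 1" s 1] by simp
  then have w_le: "w \<le> ?p / \<alpha>"
    using \<open>0 < ?p\<close> \<alpha> by (simp add: w_def divide_right_mono mult_left_le_one_le)
  have w_u: "w * u powr \<beta> = ?p / \<alpha>"
  proof -
    have "u powr \<beta> * s powr (\<alpha> + 1) = 1"
      using assms(1) \<alpha> by (simp add: u_def \<beta>_def powr_powr powr_add[symmetric] algebra_simps)
    then show ?thesis by (simp add: w_def mult_ac)
  qed
  have nonneg: "0 \<le> C powr \<beta> / \<alpha> * ?p" "0 \<le> (real n * \<beta>) powr \<beta> / \<alpha> * ?p"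
    using \<open>0 < ?p\<close> \<alpha> by simp_all
  have "isoprofile \<beta> n v \<le> isoprofile \<beta> n w"
    using isoprofile_mono[OF \<beta> n] assms(3,4) \<open>0 < w\<close> by (auto simp: w_def intro: mono_onD)
  also have "\<dots> \<le> C powr \<beta> / \<alpha> * ?p + (real n * \<beta>) powr \<beta> / \<alpha> * ?p"
  proof (cases "w \<le> switch_point \<beta> n")
    case True
    have "0 \<le> ln (1 / w)"
      using le_ln_inverse_if_le_switch_point[OF \<beta> n \<open>0 < w\<close> True] \<beta> by linarith
    then have "ln (1 / w) powr \<beta> \<le> (C * u) powr \<beta>"
      using ln_inverse_nu_mass_bound_le[OF assms(1,2)] \<beta> by (intro powr_mono2) (auto simp: w_def C_def u_def)
    also have "\<dots> = C powr \<beta> * u powr \<beta>"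
      using \<alpha> by (simp add: C_def u_def powr_mult)
    finally have "isoprofile \<beta> n w \<le> w * (C powr \<beta> * u powr \<beta>)"
      using True \<open>0 < w\<close> by (simp add: isoprofile_def log_branch_def mult_left_mono)
    also have "\<dots> = C powr \<beta> * (w * u powr \<beta>)" by (simp only: mult_ac)
    also have "\<dots> = C powr \<beta> / \<alpha> * ?p" by (simp add: w_u)
    finally show ?thesis using nonneg by linarith
  next
    case False
    then have "isoprofile \<beta> n w \<le> (real n * \<beta>) powr \<beta> * w"
      using power_branch_le_linear[OF \<beta> n] by (simp add: isoprofile_def)
    also have "\<dots> \<le> (real n * \<beta>) powr \<beta> * (?p / \<alpha>)"
      using w_le by (rule mult_left_mono) simp
    finally show ?thesis using nonneg by simp
  qed
  finally show ?thesis by (simp add: C_def add_divide_distrib distrib_right)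
qed

lemma measure_nu_meas_greaterThanAtMost_le:
  assumes "0 < s"
  shows "measure (nu_meas \<alpha> n) {0<..s} \<le> s * nu_density \<alpha> n s"
    and "measure (nu_meas \<alpha> n) {0<..s} \<le> s powr (\<alpha> + 1) * nu_density \<alpha> n s / \<alpha>"
proof -
  interpret increasing_density "nu_density \<alpha> n" by (rule increasing_density_nu)
  have "0 < nu_density \<alpha> n s" using assms by (simp add: nu_density_def)
  have le: "emeasure (nu_meas \<alpha> n) {0<..s} \<le> ennreal (s * nu_density \<alpha> n s)"
    using emeasure_\<mu>_greaterThanAtMost_le[OF assms] by (simp add: nu_meas_eq_halfline_measure)
  then have "emeasure (nu_meas \<alpha> n) {0<..s} \<noteq> \<infinity>" by (auto simp: top_unique)
  then have eq: "emeasure (nu_meas \<alpha> n) {0<..s} = ennreal (measure (nu_meas \<alpha> n) {0<..s})"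
    by (simp add: emeasure_eq_ennreal_measure)
  show "measure (nu_meas \<alpha> n) {0<..s} \<le> s * nu_density \<alpha> n s"
    using le eq assms \<open>0 < nu_density \<alpha> n s\<close> by (simp add: ennreal_le_iff)
  show "measure (nu_meas \<alpha> n) {0<..s} \<le> s powr (\<alpha> + 1) * nu_density \<alpha> n s / \<alpha>"
    using emeasure_nu_meas_greaterThanAtMost_le[OF assms] eq assms \<alpha> \<open>0 < nu_density \<alpha> n s\<close>
    by (simp add: ennreal_le_iff)
qed

lemma isoprofile_measure_le_nu_density:
  assumes "0 < s"
  shows "isoprofile (1 + 1 / \<alpha>) n (measure (nu_meas \<alpha> n) {0<..s}) \<le> nu_profile_constant \<alpha> n * nu_density \<alpha> n s"
proof -
  define \<beta> where "\<beta> = 1 + 1 / \<alpha>"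
  define v where "v = measure (nu_meas \<alpha> n) {0<..s}"
  define C where "C = ((1 + (\<alpha> + real n) / \<alpha> + \<bar>ln \<alpha>\<bar>) powr \<beta> + (real n * \<beta>) powr \<beta>) / \<alpha>"
  have \<beta>: "1 \<le> \<beta>" using \<alpha> by (simp add: \<beta>_def)
  have "0 \<le> v" by (simp add: v_def)
  have "0 < nu_density \<alpha> n s" using assms by (simp add: nu_density_def)
  then have "0 \<le> exp 1 * power_coeff \<beta> n * nu_density \<alpha> n s" "0 \<le> C * nu_density \<alpha> n s"
    using \<alpha> by (simp_all add: C_def power_coeff_def)
  moreover have "isoprofile \<beta> n v \<le> exp 1 * power_coeff \<beta> n * nu_density \<alpha> n s \<or>
      isoprofile \<beta> n v \<le> C * nu_density \<alpha> n s"
  proof (cases "1 \<le> s")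
    case True
    then show ?thesis
      using isoprofile_le_nu_density_if_ge_one[OF \<beta> True \<open>0 \<le> v\<close>]
        measure_nu_meas_greaterThanAtMost_le(1)[OF assms] by (simp add: v_def)
  next
    case False
    then show ?thesis
      using isoprofile_le_nu_density_if_le_one[OF assms _ \<open>0 \<le> v\<close>]
        measure_nu_meas_greaterThanAtMost_le(2)[OF assms] by (simp add: v_def C_def \<beta>_def)
  qed
  moreover have "nu_profile_constant \<alpha> n * nu_density \<alpha> n s
      = exp 1 * power_coeff \<beta> n * nu_density \<alpha> n s + C * nu_density \<alpha> n s"
    by (simp add: nu_profile_constant_def Let_def \<beta>_def C_def distrib_right)
  ultimately show ?thesis by (auto simp: v_def \<beta>_def)
qed

end

lemma nu_profile_constant_pos:
  assumes "0 < \<alpha>"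
  shows "0 < nu_profile_constant \<alpha> n"
proof -
  define \<beta> where "\<beta> = 1 + 1 / \<alpha>"
  have "0 < 1 + (\<alpha> + real n) / \<alpha> + \<bar>ln \<alpha>\<bar>" using assms by (simp add: add_pos_nonneg)
  then have "0 < ((1 + (\<alpha> + real n) / \<alpha> + \<bar>ln \<alpha>\<bar>) powr \<beta> + (real n * \<beta>) powr \<beta>) / \<alpha>"
    using assms by (intro divide_pos_pos add_pos_nonneg) auto
  then show ?thesis
    unfolding nu_profile_constant_def Let_def \<beta>_def[symmetric]
    by (simp add: add_nonneg_pos power_coeff_def)
qed

lemma lower_isoperimetric_nu_meas:
  assumes "0 < \<alpha>" "1 \<le> n"
  shows "lower_isoperimetric (nu_meas \<alpha> n) (\<lambda>v. isoprofile (1 + 1 / \<alpha>) n v / nu_profile_constant \<alpha> n)"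
proof -
  interpret increasing_density "nu_density \<alpha> n" by (rule increasing_density_nu[OF assms])
  have \<beta>: "1 \<le> 1 + 1 / \<alpha>" using assms(1) by simp
  have K: "0 < nu_profile_constant \<alpha> n" by (rule nu_profile_constant_pos[OF assms(1)])
  show ?thesis
    unfolding nu_meas_eq_halfline_measure
  proof (rule lower_isoperimetricI)
    show "mono_on {0..} (\<lambda>v. isoprofile (1 + 1 / \<alpha>) n v / nu_profile_constant \<alpha> n)"
      using isoprofile_mono[OF \<beta> assms(2)] K by (auto simp: mono_on_def divide_right_mono)
    show "isoprofile (1 + 1 / \<alpha>) n 0 / nu_profile_constant \<alpha> n \<le> 0"
      using isoprofile_zero[OF \<beta> assms(2)] by simp
    show "isoprofile (1 + 1 / \<alpha>) n (measure \<mu> {0<..s}) / nu_profile_constant \<alpha> n \<le> nu_density \<alpha> n s"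
      if "0 < s" for s
      using isoprofile_measure_le_nu_density[OF assms that] K
      by (simp add: nu_meas_eq_halfline_measure divide_le_eq mult.commute)
  qed
qed

theorem proposition3p2:
  fixes \<alpha> :: real and n :: nat
  assumes "\<alpha> > 0" and "n \<ge> 1"
  shows "\<exists>c c' v0 :: real. c > 0 \<and> c' > 0 \<and> 0 < v0 \<and> v0 < 1 \<and>
    (let J = (\<lambda>v::real. if v = 0 then 0
                else if v \<le> v0 then c * v * (ln (1 / v)) powr (1 + 1 / \<alpha>)
                else c' * v powr (real (n - 1) / real n))
     in lower_isoperimetric (nu_meas \<alpha> n) J \<and>
        concave_on {0<..} J \<and> mono_on {0<..} J \<and> continuous_on {0<..} J)"
proof -
  define \<beta> where "\<beta> = 1 + 1 / \<alpha>"
  define K where "K = nu_profile_constant \<alpha> n"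
  have \<beta>: "1 \<le> \<beta>" using assms(1) by (simp add: \<beta>_def)
  have "0 < K" using nu_profile_constant_pos[OF assms(1)] by (simp add: K_def)
  have c'_pos: "0 < power_coeff \<beta> n / K" using \<beta> assms(2) \<open>0 < K\<close> by (simp add: power_coeff_def)
  have J_eq: "(\<lambda>v. if v = 0 then 0
                else if v \<le> switch_point \<beta> n then 1 / K * v * (ln (1 / v)) powr (1 + 1 / \<alpha>)
                else power_coeff \<beta> n / K * v powr (real (n - 1) / real n))
      = (\<lambda>v. isoprofile \<beta> n v / K)"
    by (auto simp: fun_eq_iff isoprofile_def log_branch_def power_branch_def \<beta>_def)
  have "concave_on {0<..} (\<lambda>v. isoprofile \<beta> n v / K)"
    using isoprofile_concave[OF \<beta> assms(2)] \<open>0 < K\<close> by (intro concave_on_cdiv) auto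
  moreover have "mono_on {0<..} (\<lambda>v. isoprofile \<beta> n v / K)"
    using isoprofile_mono[OF \<beta> assms(2)] \<open>0 < K\<close> by (auto simp: mono_on_def divide_right_mono)
  moreover have "continuous_on {0<..} (\<lambda>v. isoprofile \<beta> n v / K)"
    using isoprofile_continuous[OF \<beta> assms(2)] \<open>0 < K\<close> by (intro continuous_intros) auto
  moreover note lower_isoperimetric_nu_meas[OF assms]
  ultimately have props: "let J = (\<lambda>v. isoprofile \<beta> n v / K)
     in lower_isoperimetric (nu_meas \<alpha> n) J \<and> concave_on {0<..} J \<and> mono_on {0<..} J \<and> continuous_on {0<..} J"
    by (simp add: K_def \<beta>_def)
  show ?thesis
    by (rule exI[of _ "1 / K"], rule exI[of _ "power_coeff \<beta> n / K"], rule exI[of _ "switch_point \<beta> n"])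
       (use props \<open>0 < K\<close> c'_pos switch_point_pos[OF \<beta> assms(2)] switch_point_less_one[OF \<beta> assms(2)]
         in \<open>simp only: J_eq simp_thms divide_pos_pos zero_less_one\<close>)
qed

end
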